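(* Let $(A,\cdot)$ be a finite-dimensional associative algebra and $r\in A\otimes A$ antisymmetric satisfying $r_{12}r_{13}+r_{13}r_{23}-r_{23}r_{12}=0$. Let $D_r$ be the vector space $A\oplus A^*$ with the product $x*y=x\cdot y$, $a^**b^*=R^*(r(a^* ))b^*+L^*(r(b^* ))a^*$, $x*a^*=x\cdot r(a^* )-r(R^*(x)a^* )+R^*(x)a^*$, $a^**x=r(a^* )\cdot x-r(L^*(x)a^* )+L^*(x)a^*$ ($x,y\in A$, $a^*,b^*\in A^*$), and let $A\ltimes_{R^*,L^*}A^*$ be $A\oplus A^*$ with product $(x+a^* )(y+b^* )=x\cdot y+R^*(x)b^*+L^*(y)a^*$. Let $\mathcal B(x+a^*,y+b^* )=\langle x,b^*\rangle+\langle a^*,y\rangle$. Then $D_r$ and $A\ltimes_{R^*,L^*}A^*$ are associative algebras, $\mathcal B$ is invariant on both, and there is an isomorphism of associative algebras $\varphi:A\ltimes_{R^*,L^*}A^*\to D_r$ with $\mathcal B(\varphi(u),\varphi(v))=\mathcal B(u,v)$ for all $u,v$ (i.e. they are isomorphic as Frobenius algebras).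
   Context: $L(x)y=x\cdot y$, $R(x)y=y\cdot x$; $\langle L^*(x)a^*,y\rangle=\langle a^*,x\cdot y\rangle$, $\langle R^*(x)a^*,y\rangle=\langle a^*,y\cdot x\rangle$. Antisymmetric means $\sigma(r)=-r$ with $\sigma(x\otimes y)=y\otimes x$. For $r=\sum_i x_i\otimes y_i$: $r_{12}r_{13}=\sum_{i,j}x_i\cdot x_j\otimes y_i\otimes y_j$, $r_{13}r_{23}=\sum_{i,j}x_i\otimes x_j\otimes y_i\cdot y_j$, $r_{23}r_{12}=\sum_{i,j}x_j\otimes x_i\cdot y_j\otimes y_i$. $r$ is regarded as a map $A^*\to A$ by $\langle u^*\otimes v^*,r\rangle=\langle u^*,r(v^* )\rangle$. A bilinear form $\mathcal B$ on an associative algebra is invariant if $\mathcal B(uv,w)=\mathcal B(u,vw)$. *)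

theory Defs
  imports Main
begin

text \<open>The finite-dimensional algebra A over a field 'k is presented in a
basis indexed by the finite type 'n: elements of A are coordinate functions
'n \<Rightarrow> 'k, and the product is given by structure constants c,
e_i e_j = sum_k c i j k e_k (this encodes bilinearity). The dual space A^* is
identified with 'n \<Rightarrow> 'k via the dual basis, so the pairing is
<a, x> = sum_i a i * x i. An element r of A (x) A is r = sum_{i,j} r i j e_i (x) e_j.\<close>

definition amul :: "('n::finite \<Rightarrow> 'n \<Rightarrow> 'n \<Rightarrow> 'k::field) \<Rightarrow> ('n \<Rightarrow> 'k) \<Rightarrow> ('n \<Rightarrow> 'k) \<Rightarrow> ('n \<Rightarrow> 'k)" where
  "amul c x y = (\<lambda>k. \<Sum>i\<in>UNIV. \<Sum>j\<in>UNIV. x i * y j * c i j k)"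

definition pairing :: "('n::finite \<Rightarrow> 'k::field) \<Rightarrow> ('n \<Rightarrow> 'k) \<Rightarrow> 'k" where
  "pairing a x = (\<Sum>i\<in>UNIV. a i * x i)"

definition basis :: "'n \<Rightarrow> 'n \<Rightarrow> 'k::field" where
  "basis j = (\<lambda>i. if i = j then 1 else 0)"

text \<open>L^*(x) a and R^*(x) a, determined by <L^*(x)a, y> = <a, x.y>, <R^*(x)a, y> = <a, y.x>.\<close>
definition dualL :: "('n::finite \<Rightarrow> 'n \<Rightarrow> 'n \<Rightarrow> 'k::field) \<Rightarrow> ('n \<Rightarrow> 'k) \<Rightarrow> ('n \<Rightarrow> 'k) \<Rightarrow> ('n \<Rightarrow> 'k)" where
  "dualL c x a = (\<lambda>j. pairing a (amul c x (basis j)))"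

definition dualR :: "('n::finite \<Rightarrow> 'n \<Rightarrow> 'n \<Rightarrow> 'k::field) \<Rightarrow> ('n \<Rightarrow> 'k) \<Rightarrow> ('n \<Rightarrow> 'k) \<Rightarrow> ('n \<Rightarrow> 'k)" where
  "dualR c x a = (\<lambda>j. pairing a (amul c (basis j) x))"

text \<open>r as a map A^* -> A: <u (x) v, r> = <u, r(v)>.\<close>
definition rmap :: "('n::finite \<Rightarrow> 'n \<Rightarrow> 'k::field) \<Rightarrow> ('n \<Rightarrow> 'k) \<Rightarrow> ('n \<Rightarrow> 'k)" where
  "rmap r a = (\<lambda>i. \<Sum>j\<in>UNIV. r i j * a j)"

definition antisymmetric_tensor :: "('n \<Rightarrow> 'n \<Rightarrow> 'k::field) \<Rightarrow> bool" where
  "antisymmetric_tensor r \<longleftrightarrow> (\<forall>i j. r j i = - r i j)"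

text \<open>Coordinates (p,q,s) of r12 r13, r13 r23, r23 r12 in A (x) A (x) A, obtained from the
paper's formulas with r = sum_{(i,j)} x_(i,j) (x) y_(i,j), x_(i,j) = e_i, y_(i,j) = r i j e_j.\<close>
definition r12r13 :: "('n::finite \<Rightarrow> 'n \<Rightarrow> 'n \<Rightarrow> 'k::field) \<Rightarrow> ('n \<Rightarrow> 'n \<Rightarrow> 'k) \<Rightarrow> 'n \<Rightarrow> 'n \<Rightarrow> 'n \<Rightarrow> 'k" where
  "r12r13 c r p q s = (\<Sum>i\<in>UNIV. \<Sum>j\<in>UNIV. \<Sum>k\<in>UNIV. \<Sum>l\<in>UNIV.
      r i j * r k l * (amul c (basis i) (basis k) p * basis j q * basis l s))"

definition r13r23 :: "('n::finite \<Rightarrow> 'n \<Rightarrow> 'n \<Rightarrow> 'k::field) \<Rightarrow> ('n \<Rightarrow> 'n \<Rightarrow> 'k) \<Rightarrow> 'n \<Rightarrow> 'n \<Rightarrow> 'n \<Rightarrow> 'k" where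
  "r13r23 c r p q s = (\<Sum>i\<in>UNIV. \<Sum>j\<in>UNIV. \<Sum>k\<in>UNIV. \<Sum>l\<in>UNIV.
      r i j * r k l * (basis i p * basis k q * amul c (basis j) (basis l) s))"

definition r23r12 :: "('n::finite \<Rightarrow> 'n \<Rightarrow> 'n \<Rightarrow> 'k::field) \<Rightarrow> ('n \<Rightarrow> 'n \<Rightarrow> 'k) \<Rightarrow> 'n \<Rightarrow> 'n \<Rightarrow> 'n \<Rightarrow> 'k" where
  "r23r12 c r p q s = (\<Sum>i\<in>UNIV. \<Sum>j\<in>UNIV. \<Sum>k\<in>UNIV. \<Sum>l\<in>UNIV.
      r i j * r k l * (basis k p * amul c (basis i) (basis l) q * basis j s))"

definition assoc_YBE :: "('n::finite \<Rightarrow> 'n \<Rightarrow> 'n \<Rightarrow> 'k::field) \<Rightarrow> ('n \<Rightarrow> 'n \<Rightarrow> 'k) \<Rightarrow> bool" where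
  "assoc_YBE c r \<longleftrightarrow> (\<forall>p q s. r12r13 c r p q s + r13r23 c r p q s - r23r12 c r p q s = 0)"

type_synonym ('n, 'k) dvec = "('n \<Rightarrow> 'k) \<times> ('n \<Rightarrow> 'k)"

definition Dmul :: "('n::finite \<Rightarrow> 'n \<Rightarrow> 'n \<Rightarrow> 'k::field) \<Rightarrow> ('n \<Rightarrow> 'n \<Rightarrow> 'k) \<Rightarrow> ('n,'k) dvec \<Rightarrow> ('n,'k) dvec \<Rightarrow> ('n,'k) dvec" where
  "Dmul c r u v = (let x = fst u; a = snd u; y = fst v; b = snd v in
     ((\<lambda>i. amul c x y i
         + (amul c x (rmap r b) i - rmap r (dualR c x b) i)
         + (amul c (rmap r a) y i - rmap r (dualL c y a) i)),
      (\<lambda>i. (dualR c (rmap r a) b i + dualL c (rmap r b) a i)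
         + dualR c x b i + dualL c y a i)))"

definition SDmul :: "('n::finite \<Rightarrow> 'n \<Rightarrow> 'n \<Rightarrow> 'k::field) \<Rightarrow> ('n,'k) dvec \<Rightarrow> ('n,'k) dvec \<Rightarrow> ('n,'k) dvec" where
  "SDmul c u v = (let x = fst u; a = snd u; y = fst v; b = snd v in
     (amul c x y, (\<lambda>i. dualR c x b i + dualL c y a i)))"

definition Bform :: "('n::finite,'k::field) dvec \<Rightarrow> ('n,'k) dvec \<Rightarrow> 'k" where
  "Bform u v = pairing (snd v) (fst u) + pairing (snd u) (fst v)"

definition associative_op :: "('v \<Rightarrow> 'v \<Rightarrow> 'v) \<Rightarrow> bool" where
  "associative_op m \<longleftrightarrow> (\<forall>u v w. m (m u v) w = m u (m v w))"

definition invariant_form :: "('v \<Rightarrow> 'v \<Rightarrow> 'v) \<Rightarrow> ('v \<Rightarrow> 'v \<Rightarrow> 'k) \<Rightarrow> bool" where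
  "invariant_form m B \<longleftrightarrow> (\<forall>u v w. B (m u v) w = B u (m v w))"

definition dadd :: "('n,'k::field) dvec \<Rightarrow> ('n,'k) dvec \<Rightarrow> ('n,'k) dvec" where
  "dadd u v = ((\<lambda>i. fst u i + fst v i), (\<lambda>i. snd u i + snd v i))"

definition dscale :: "'k::field \<Rightarrow> ('n,'k) dvec \<Rightarrow> ('n,'k) dvec" where
  "dscale t u = ((\<lambda>i. t * fst u i), (\<lambda>i. t * snd u i))"

definition dlinear :: "(('n,'k::field) dvec \<Rightarrow> ('n,'k) dvec) \<Rightarrow> bool" where
  "dlinear f \<longleftrightarrow> (\<forall>u v. f (dadd u v) = dadd (f u) (f v)) \<and> (\<forall>t u. f (dscale t u) = dscale t (f u))"

definition alg_iso :: "(('n,'k::field) dvec \<Rightarrow> ('n,'k) dvec \<Rightarrow> ('n,'k) dvec) \<Rightarrow> (('n,'k) dvec \<Rightarrow> ('n,'k) dvec \<Rightarrow> ('n,'k) dvec) \<Rightarrow> (('n,'k) dvec \<Rightarrow> ('n,'k) dvec) \<Rightarrow> bool" where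
  "alg_iso m1 m2 f \<longleftrightarrow> dlinear f \<and> bij f \<and> (\<forall>u v. f (m1 u v) = m2 (f u) (f v))"

end

theory Submission
  imports Defs
begin

(* The semidirect product A \<ltimes> A* with actions R*, L* on A* is associative because R* and L*
   make the dual space A* an A-bimodule, and B is invariant on it by the adjointness of
   R* and L* to the product of A.  For D_r we do not verify associativity directly: the
   twist map  x + a  |->  (x - r a) + a  for x in A, a in A* is a linear bijection, and it
   is multiplicative from the semidirect product to D_r precisely because, for
   antisymmetric r, the associative Yang-Baxter equation yields the operator
   identity  r(a) . r(b) = r(R*(r a) b + L*(r b) a).  Antisymmetry of r also makes the
   twist preserve B.  Associativity and invariance are then transported to D_r along
   this bijective multiplicative isometry. *)

lemma basis_app: "basis j q = (if q = j then 1 else (0::'k::field))"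
  by (simp add: basis_def)

lemma times_if_zero_right: "a * (if P then b else 0) = (if P then a * b else (0::'k::field))"
  by simp

lemma times_if_zero_left: "(if P then b else 0) * a = (if P then b * a else (0::'k::field))"
  by simp

lemma sum_if_zero: "(\<Sum>j\<in>A. if P then f j else 0) = (if P then (\<Sum>j\<in>A. f j) else (0::'k::field))"
  by simp

lemmas delta_simps = basis_app times_if_zero_right times_if_zero_left sum_if_zero

lemma pairing_basis [simp]: "pairing a (basis j) = a j"
  unfolding pairing_def by (simp add: delta_simps)

lemma amul_basis: "amul c (basis i) (basis k) p = c i k p"
  unfolding amul_def by (simp add: delta_simps cong: if_cong)

lemma amul_expand_left: "amul c y x k = (\<Sum>j\<in>UNIV. y j * amul c (basis j) x k)"
  unfolding amul_def by (simp add: sum_distrib_left mult_ac delta_simps cong: if_cong)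

lemma amul_expand_right: "amul c x y k = (\<Sum>j\<in>UNIV. y j * amul c x (basis j) k)"
  unfolding amul_def
  by (simp add: sum_distrib_left mult_ac delta_simps cong: if_cong) (subst sum.swap, simp add: mult_ac)

lemma sum_swap_12: "(\<Sum>a\<in>A. \<Sum>b\<in>B. \<Sum>c\<in>C. \<Sum>d\<in>D. F a b c d) = (\<Sum>b\<in>B. \<Sum>a\<in>A. \<Sum>c\<in>C. \<Sum>d\<in>D. F a b c d)"
  by (rule sum.swap)

lemma sum_swap_23: "(\<Sum>a\<in>A. \<Sum>b\<in>B. \<Sum>c\<in>C. \<Sum>d\<in>D. F a b c d) = (\<Sum>a\<in>A. \<Sum>c\<in>C. \<Sum>b\<in>B. \<Sum>d\<in>D. F a b c d)"
  by (rule sum.cong[OF refl], rule sum.swap)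

lemma sum_swap_34: "(\<Sum>a\<in>A. \<Sum>b\<in>B. \<Sum>c\<in>C. \<Sum>d\<in>D. F a b c d) = (\<Sum>a\<in>A. \<Sum>b\<in>B. \<Sum>d\<in>D. \<Sum>c\<in>C. F a b c d)"
  by (rule sum.cong[OF refl], rule sum.cong[OF refl], rule sum.swap)

lemma sum_swap_pairs: "(\<Sum>a\<in>A. \<Sum>b\<in>B. \<Sum>c\<in>C. \<Sum>d\<in>D. F a b c d) = (\<Sum>c\<in>C. \<Sum>d\<in>D. \<Sum>a\<in>A. \<Sum>b\<in>B. F a b c d)"
  by (rule trans[OF sum_swap_23], rule trans[OF sum_swap_12], rule trans[OF sum_swap_34], rule sum_swap_23)

lemma pairing_add_left: "pairing (\<lambda>i. a i + b i) x = pairing a x + pairing b x"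
  unfolding pairing_def by (simp add: algebra_simps sum.distrib)

lemma pairing_diff_right: "pairing a (\<lambda>i. x i - y i) = pairing a x - pairing a y"
  unfolding pairing_def by (simp add: algebra_simps sum_subtractf)

lemma amul_diff_left: "amul c (\<lambda>i. x i - y i) z = (\<lambda>k. amul c x z k - amul c y z k)"
  unfolding amul_def by (simp add: algebra_simps sum_subtractf)

lemma amul_diff_right: "amul c x (\<lambda>i. y i - z i) = (\<lambda>k. amul c x y k - amul c x z k)"
  unfolding amul_def by (simp add: algebra_simps sum_subtractf)

lemma dualR_diff: "dualR c (\<lambda>i. x i - y i) b = (\<lambda>j. dualR c x b j - dualR c y b j)"
  unfolding dualR_def amul_diff_right pairing_diff_right by simp

lemma dualL_diff: "dualL c (\<lambda>i. x i - y i) b = (\<lambda>j. dualL c x b j - dualL c y b j)"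
  unfolding dualL_def amul_diff_left pairing_diff_right by simp

lemma dualR_add: "dualR c x (\<lambda>i. a i + b i) = (\<lambda>j. dualR c x a j + dualR c x b j)"
  unfolding dualR_def pairing_add_left by simp

lemma dualL_add: "dualL c x (\<lambda>i. a i + b i) = (\<lambda>j. dualL c x a j + dualL c x b j)"
  unfolding dualL_def pairing_add_left by simp

lemma rmap_add: "rmap r (\<lambda>i. a i + b i) = (\<lambda>i. rmap r a i + rmap r b i)"
  unfolding rmap_def by (simp add: algebra_simps sum.distrib)

lemma rmap_diff: "rmap r (\<lambda>i. a i - b i) = (\<lambda>i. rmap r a i - rmap r b i)"
  unfolding rmap_def by (simp add: algebra_simps sum_subtractf)

lemma rmap_scale: "rmap r (\<lambda>i. t * a i) = (\<lambda>i. t * rmap r a i)"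
  unfolding rmap_def by (simp add: algebra_simps sum_distrib_left)

section \<open>The dual bimodule A^*\<close>

lemma pairing_dualR: "pairing (dualR c x a) y = pairing a (amul c y x)"
proof -
  have "pairing a (amul c y x) = (\<Sum>i\<in>UNIV. a i * (\<Sum>j\<in>UNIV. y j * amul c (basis j) x i))"
    unfolding pairing_def by (subst amul_expand_left, rule refl)
  also have "\<dots> = pairing (dualR c x a) y"
    unfolding dualR_def pairing_def
    by (simp add: sum_distrib_left sum_distrib_right mult_ac, rule sum.swap)
  finally show ?thesis by simp
qed

lemma pairing_dualL: "pairing (dualL c x a) y = pairing a (amul c x y)"
proof -
  have "pairing a (amul c x y) = (\<Sum>i\<in>UNIV. a i * (\<Sum>j\<in>UNIV. y j * amul c x (basis j) i))"
    unfolding pairing_def by (subst amul_expand_right, rule refl)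
  also have "\<dots> = pairing (dualL c x a) y"
    unfolding dualL_def pairing_def
    by (simp add: sum_distrib_left sum_distrib_right mult_ac, rule sum.swap)
  finally show ?thesis by simp
qed

lemma dualR_amul:
  assumes "\<forall>x y z. amul c (amul c x y) z = amul c x (amul c y z)"
  shows "dualR c (amul c x y) w = dualR c x (dualR c y w)"
  unfolding dualR_def[of c x] by (rule ext, simp add: pairing_dualR, simp add: dualR_def assms)

lemma dualL_amul:
  assumes "\<forall>x y z. amul c (amul c x y) z = amul c x (amul c y z)"
  shows "dualL c z (dualL c y a) = dualL c (amul c y z) a"
  unfolding dualL_def[of c z] by (rule ext, simp add: pairing_dualL, simp add: dualL_def assms)

lemma dualL_dualR_commute:
  assumes "\<forall>x y z. amul c (amul c x y) z = amul c x (amul c y z)"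
  shows "dualL c z (dualR c x b) = dualR c x (dualL c z b)"
proof (rule ext)
  fix j
  have "dualL c z (dualR c x b) j = pairing b (amul c (amul c z (basis j)) x)"
    by (simp add: dualL_def pairing_dualR)
  also have "\<dots> = pairing b (amul c z (amul c (basis j) x))"
    using assms by simp
  also have "\<dots> = dualR c x (dualL c z b) j"
    by (simp add: dualR_def pairing_dualL)
  finally show "dualL c z (dualR c x b) j = dualR c x (dualL c z b) j" .
qed

lemma SDmul_associative:
  assumes "\<forall>x y z. amul c (amul c x y) z = amul c x (amul c y z)"
  shows "associative_op (SDmul c)"
  unfolding associative_op_def SDmul_def Let_def
  by (simp add: assms dualL_add dualR_add dualR_amul[OF assms]
      dualL_dualR_commute[OF assms] dualL_amul[OF assms] add_ac)

text \<open>Invariance of B needs only adjointness, not associativity of A.\<close>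
lemma SDmul_invariant: "invariant_form (SDmul c) Bform"
  unfolding invariant_form_def SDmul_def Let_def Bform_def
  by (simp add: pairing_add_left pairing_dualR pairing_dualL add_ac)

section \<open>The associative Yang-Baxter equation in operator form\<close>

lemma rmap_antisym:
  assumes "antisymmetric_tensor r"
  shows "rmap r a = (\<lambda>m. - (\<Sum>l\<in>UNIV. r l m * a l))"
proof -
  have skew: "\<And>i j. r i j = - r j i" using assms unfolding antisymmetric_tensor_def by metis
  show ?thesis unfolding rmap_def by (rule ext, subst skew, simp add: sum_negf[symmetric])
qed

lemma pairing_rmap_skew:
  assumes "antisymmetric_tensor r"
  shows "pairing b (rmap r a) = - pairing a (rmap r b)"
  unfolding rmap_antisym[OF assms, of b]
  unfolding pairing_def rmap_def
  by (simp add: sum_distrib_left sum_negf mult_ac, rule sum.swap)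

lemma r12r13_coord: "r12r13 c r p q s = (\<Sum>i\<in>UNIV. \<Sum>k\<in>UNIV. r i q * r k s * c i k p)"
  unfolding r12r13_def amul_basis by (simp add: delta_simps cong: if_cong)

lemma r13r23_coord: "r13r23 c r p q s = (\<Sum>j\<in>UNIV. \<Sum>l\<in>UNIV. r p j * r q l * c j l s)"
  unfolding r13r23_def amul_basis by (simp add: delta_simps cong: if_cong)

lemma r23r12_coord: "r23r12 c r p q s = (\<Sum>i\<in>UNIV. \<Sum>l\<in>UNIV. r i s * r p l * c i l q)"
  unfolding r23r12_def amul_basis by (simp add: delta_simps cong: if_cong)

text \<open>Contracting the second and third tensor slots with \<open>a\<close> and \<open>b\<close>
  turns each term into an operator expression in r.\<close>
lemma contract_r12r13:
  "(\<Sum>q\<in>UNIV. \<Sum>s\<in>UNIV. a q * b s * r12r13 c r p q s) = amul c (rmap r a) (rmap r b) p"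
  unfolding r12r13_coord amul_def rmap_def
  by (simp add: sum_distrib_left sum_distrib_right mult_ac)
     (subst sum_swap_pairs, rule sum.cong[OF refl], rule sum.cong[OF refl], rule sum.swap)

lemma contract_r13r23:
  assumes "antisymmetric_tensor r"
  shows "(\<Sum>q\<in>UNIV. \<Sum>s\<in>UNIV. a q * b s * r13r23 c r p q s) = - rmap r (dualR c (rmap r a) b) p"
  unfolding rmap_antisym[OF assms, of a] r13r23_coord amul_def dualR_def pairing_def
  by (simp add: rmap_def sum_distrib_left sum_distrib_right mult_ac delta_simps sum_negf cong: if_cong)
     (rule trans[OF sum_swap_23], rule trans[OF sum_swap_12], rule trans[OF sum_swap_23], rule sum_swap_34)

lemma contract_r23r12:
  "(\<Sum>q\<in>UNIV. \<Sum>s\<in>UNIV. a q * b s * r23r12 c r p q s) = rmap r (dualL c (rmap r b) a) p"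
  unfolding r23r12_coord amul_def rmap_def dualL_def pairing_def
  by (simp add: sum_distrib_left sum_distrib_right mult_ac delta_simps cong: if_cong)
     (rule trans[OF sum_swap_34], rule trans[OF sum_swap_23], rule trans[OF sum_swap_12], rule sum_swap_34)

lemma rmap_AYBE:
  assumes "antisymmetric_tensor r" "assoc_YBE c r"
  shows "amul c (rmap r a) (rmap r b) p
    = rmap r (dualR c (rmap r a) b) p + rmap r (dualL c (rmap r b) a) p"
proof -
  have vanish: "\<And>q s. r12r13 c r p q s + r13r23 c r p q s - r23r12 c r p q s = 0"
    using assms(2) unfolding assoc_YBE_def by blast
  have "0 = (\<Sum>q\<in>UNIV. \<Sum>s\<in>UNIV. a q * b s * (r12r13 c r p q s + r13r23 c r p q s - r23r12 c r p q s))"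
    by (simp add: vanish)
  also have "\<dots> = (\<Sum>q\<in>UNIV. \<Sum>s\<in>UNIV. a q * b s * r12r13 c r p q s)
     + (\<Sum>q\<in>UNIV. \<Sum>s\<in>UNIV. a q * b s * r13r23 c r p q s)
     - (\<Sum>q\<in>UNIV. \<Sum>s\<in>UNIV. a q * b s * r23r12 c r p q s)"
    by (simp add: algebra_simps sum.distrib sum_subtractf)
  also have "\<dots> = amul c (rmap r a) (rmap r b) p
      - rmap r (dualR c (rmap r a) b) p - rmap r (dualL c (rmap r b) a) p"
    unfolding contract_r12r13 contract_r13r23[OF assms(1)] contract_r23r12 by simp
  finally show ?thesis by (simp add: algebra_simps)
qed

section \<open>The twist map\<close>

definition twist :: "('n::finite \<Rightarrow> 'n \<Rightarrow> 'k::field) \<Rightarrow> ('n,'k) dvec \<Rightarrow> ('n,'k) dvec" where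
  "twist r u = ((\<lambda>i. fst u i - rmap r (snd u) i), snd u)"

definition untwist :: "('n::finite \<Rightarrow> 'n \<Rightarrow> 'k::field) \<Rightarrow> ('n,'k) dvec \<Rightarrow> ('n,'k) dvec" where
  "untwist r u = ((\<lambda>i. fst u i + rmap r (snd u) i), snd u)"

lemma twist_bij: "bij (twist r)"
  by (rule o_bij[of "untwist r"]) (auto simp: twist_def untwist_def)

lemma twist_linear: "dlinear (twist r)"
  unfolding dlinear_def twist_def dadd_def dscale_def
  by (simp add: rmap_add rmap_scale algebra_simps)

text \<open>The twist is multiplicative from the semidirect product to D_r; the only
  non-bilinear cancellation needed is the operator form of the AYBE.\<close>
lemma twist_multiplicative:
  assumes "antisymmetric_tensor r" "assoc_YBE c r"
  shows "twist r (SDmul c u v) = Dmul c r (twist r u) (twist r v)"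
proof -
  obtain x a y b where uv: "u = (x, a)" "v = (y, b)" by (cases u, cases v)
  show ?thesis
    unfolding uv twist_def SDmul_def Dmul_def Let_def
    by (simp add: amul_diff_left amul_diff_right dualR_diff dualL_diff rmap_add rmap_diff)
       (rule ext, simp add: rmap_AYBE[OF assms] algebra_simps)
qed

text \<open>By skew-symmetry of r, the twist preserves B.\<close>
lemma twist_isometry:
  assumes "antisymmetric_tensor r"
  shows "Bform (twist r u) (twist r v) = Bform u v"
  unfolding Bform_def twist_def
  using pairing_rmap_skew[OF assms, of "snd v" "snd u"]
  by (simp add: pairing_diff_right)

lemma associative_transfer:
  assumes surj: "surj f" and mult: "\<And>u v. f (m1 u v) = m2 (f u) (f v)"
    and assoc: "associative_op m1"
  shows "associative_op m2"
  unfolding associative_op_def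
proof (intro allI)
  fix p q w
  obtain u v z where "p = f u" "q = f v" "w = f z" using surj by (metis surjD)
  then show "m2 (m2 p q) w = m2 p (m2 q w)"
    using assoc unfolding associative_op_def by (simp flip: mult)
qed

lemma invariant_transfer:
  assumes surj: "surj f" and mult: "\<And>u v. f (m1 u v) = m2 (f u) (f v)"
    and iso: "\<And>u v. B2 (f u) (f v) = B1 u v" and inv: "invariant_form m1 B1"
  shows "invariant_form m2 B2"
  unfolding invariant_form_def
proof (intro allI)
  fix p q w
  obtain u v z where "p = f u" "q = f v" "w = f z" using surj by (metis surjD)
  then show "B2 (m2 p q) w = B2 p (m2 q w)"
    using inv unfolding invariant_form_def by (simp add: iso flip: mult)
qed

theorem theorem2p4p9:
  fixes c :: "'n::finite \<Rightarrow> 'n \<Rightarrow> 'n \<Rightarrow> 'k::field"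
    and r :: "'n \<Rightarrow> 'n \<Rightarrow> 'k"
  assumes "\<forall>x y z. amul c (amul c x y) z = amul c x (amul c y z)"
    and "antisymmetric_tensor r"
    and "assoc_YBE c r"
  shows "associative_op (Dmul c r) \<and> associative_op (SDmul c)
    \<and> invariant_form (Dmul c r) Bform \<and> invariant_form (SDmul c) Bform
    \<and> (\<exists>\<phi>. alg_iso (SDmul c) (Dmul c r) \<phi> \<and> (\<forall>u v. Bform (\<phi> u) (\<phi> v) = Bform u v))"
proof -
  have SD_assoc: "associative_op (SDmul c)" by (rule SDmul_associative[OF assms(1)])
  have surj: "surj (twist r)" using twist_bij bij_is_surj by blast
  note mult = twist_multiplicative[OF assms(2,3)]
  note iso = twist_isometry[OF assms(2)]
  have "associative_op (Dmul c r)" by (rule associative_transfer[OF surj mult SD_assoc])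
  moreover have "invariant_form (Dmul c r) Bform"
    by (rule invariant_transfer[OF surj mult iso SDmul_invariant])
  moreover have "alg_iso (SDmul c) (Dmul c r) (twist r)"
    unfolding alg_iso_def using twist_linear twist_bij mult by blast
  ultimately show ?thesis using SD_assoc SDmul_invariant iso by blast
qed

end
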